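(* The criterion $\Phi(g)=\frac12\sum_{k=0}^{S+1}(g(k)-\mathbb W(k))^2$ admits a unique minimizer $\hat g$ over $\mathcal C(\mathcal K)$. Moreover, an element $\hat g\in\mathcal C(\mathcal K)$ is this minimizer if and only if the process $\widehat{\mathbb H}$ defined on $\{0,\dots,S+2\}$ by $\widehat{\mathbb H}(0)=0$ and $\widehat{\mathbb H}(x)=\sum_{k=0}^{x-1}\sum_{j=0}^k\hat g(j)$ for $x\in\{1,\dots,S+2\}$ satisfies $\widehat{\mathbb H}(x)\ge\mathbb H(x)$ for all $x\in\{0,\dots,S+2\}$, with equality $\widehat{\mathbb H}(x)=\mathbb H(x)$ whenever $x\in\{s_0,s_1,\dots,s_{m+1},S+2\}$ or $x$ is a knot of $\hat g$ lying in $\{s_j+1,\dots,s_{j+1}-1\}$ for some $j\in\{0,\dots,m\}$.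
   Context: Let $p_0$ be a convex probability mass function on $\mathbb N=\{0,1,\dots\}$ with support $\{0,\dots,S\}$, $S\ge1$ an integer (convex means $\Delta p_0(k)=p_0(k+1)-2p_0(k)+p_0(k-1)\ge0$ for all $k\ge1$). A knot of a sequence (or finite vector) $p$ is an integer $k\ge1$ (in the index range where $\Delta p(k)$ is defined) with $\Delta p(k)>0$; note $S+1$ is a knot of $p_0$. Let $F_{p_0}(k)=\sum_{j=0}^kp_0(j)$, $F_{p_0}(-1)=0$. Let $\mathbb U$ be a standard Brownian bridge on $[0,1]$, define $\mathbb W(k)=\mathbb U(F_{p_0}(k))-\mathbb U(F_{p_0}(k-1))$ for $k\in\{0,\dots,S+1\}$ (so $\mathbb W(S+1)=0$), and $\mathbb H(0)=0$, $\mathbb H(z)=\sum_{k=0}^{z-1}\mathbb U(F_{p_0}(k))$ for $z\ge1$. Let $s_1<\dots<s_m$ be the knots of $p_0$ lying in $\{1,\dots,S\}$ (the interior knots; possibly $m=0$), and put $s_0=0$, $s_{m+1}=S+1$, $\mathcal K=\{s_1,\dots,s_m\}$. A vector $g=(g(0),\dots,g(S+1))$ is convex on $\{a,\dots,b\}$ if $g(k+1)-2g(k)+g(k-1)\ge0$ for all $a<k<b$. $\mathcal C(\mathcal K)$ is the set of $g\in\mathbb R^{S+2}$ that are convex on $\{s_j,\dots,s_{j+1}\}$ for every $j=0,\dots,m$. The statement holds for every realization of $\mathbb U$. *)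

theory Defs
  imports "HOL-Analysis.Analysis"
begin

text \<open>Second difference of a sequence (for k \<ge> 1).\<close>
definition D2 :: "(nat \<Rightarrow> real) \<Rightarrow> nat \<Rightarrow> real" where
  "D2 p k = p (k + 1) - 2 * p k + p (k - 1)"

definition convex_pmf_support :: "(nat \<Rightarrow> real) \<Rightarrow> nat \<Rightarrow> bool" where
  "convex_pmf_support p S \<longleftrightarrow>
     (\<forall>k. 0 \<le> p k) \<and> (\<Sum>k\<le>S. p k) = 1 \<and>
     (\<forall>k\<le>S. 0 < p k) \<and> (\<forall>k>S. p k = 0) \<and>
     (\<forall>k\<ge>1. 0 \<le> D2 p k)"

definition interior_knots :: "(nat \<Rightarrow> real) \<Rightarrow> nat \<Rightarrow> nat set" where
  "interior_knots p S = {k. 1 \<le> k \<and> k \<le> S \<and> 0 < D2 p k}"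

text \<open>The sequence s_0 = 0 < s_1 < ... < s_m < s_{m+1} = S+1.\<close>
definition knot_seq :: "(nat \<Rightarrow> real) \<Rightarrow> nat \<Rightarrow> nat list" where
  "knot_seq p S = sorted_list_of_set ({0, S + 1} \<union> interior_knots p S)"

definition convex_on_range :: "(nat \<Rightarrow> real) \<Rightarrow> nat \<Rightarrow> nat \<Rightarrow> bool" where
  "convex_on_range g a b \<longleftrightarrow> (\<forall>k. a < k \<and> k < b \<longrightarrow> 0 \<le> D2 g k)"

text \<open>C(K): vectors (g(0),...,g(S+1)), represented as functions vanishing beyond S+1,
  convex on each {s_j,...,s_{j+1}}.\<close>
definition CK :: "(nat \<Rightarrow> real) \<Rightarrow> nat \<Rightarrow> (nat \<Rightarrow> real) set" where
  "CK p S = {g. (\<forall>k>S+1. g k = 0) \<and>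
     (let s = knot_seq p S in
        \<forall>j < length s - 1. convex_on_range g (s ! j) (s ! (j + 1)))}"

definition cdf :: "(nat \<Rightarrow> real) \<Rightarrow> nat \<Rightarrow> real" where
  "cdf p k = (\<Sum>j\<le>k. p j)"

definition Wproc :: "(real \<Rightarrow> real) \<Rightarrow> (nat \<Rightarrow> real) \<Rightarrow> nat \<Rightarrow> real" where
  "Wproc U p k = U (cdf p k) - (if k = 0 then U 0 else U (cdf p (k - 1)))"

definition Hproc :: "(real \<Rightarrow> real) \<Rightarrow> (nat \<Rightarrow> real) \<Rightarrow> nat \<Rightarrow> real" where
  "Hproc U p z = (\<Sum>k<z. U (cdf p k))"

definition Hhat :: "(nat \<Rightarrow> real) \<Rightarrow> nat \<Rightarrow> real" where
  "Hhat g x = (\<Sum>k<x. \<Sum>j\<le>k. g j)"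

definition Phi :: "(real \<Rightarrow> real) \<Rightarrow> (nat \<Rightarrow> real) \<Rightarrow> nat \<Rightarrow> (nat \<Rightarrow> real) \<Rightarrow> real" where
  "Phi U p S g = (1/2) * (\<Sum>k\<le>S+1. (g k - Wproc U p k)^2)"

definition vec_knot :: "(nat \<Rightarrow> real) \<Rightarrow> nat \<Rightarrow> nat \<Rightarrow> bool" where
  "vec_knot g S k \<longleftrightarrow> 1 \<le> k \<and> k \<le> S \<and> 0 < D2 g k"

end

theory Submission
  imports Defs
begin

(* Write d = g - W for the residual of a candidate g.  Since U(0) = 0, the
   partial sums of W are U(F(k)), hence Hhat g - Hproc = Hhat d: the gap between the two
   processes is the doubly cumulated residual.  The set C(K) is a closed convex cone and
   Phi(g) = 1/2 |g - W|^2, so g minimises Phi over C(K) iff g is the projection of W onto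
   the cone, i.e. iff <d, h> >= 0 for all h in C(K) and <d, g> = 0.
   Summation by parts twice writes <d, h> as a sum of Hhat d(x) * D2 h(x) plus two boundary
   terms, while pairing d with the ramp (x - k)_+ gives exactly Hhat d(x).  Testing with
   ramps and negated ramps identifies the dual cone: Hhat d >= 0 on {0..S+2}, with equality
   at the knots of p0 and at S+1, S+2.  Given this, <d, g> = 0 says that Hhat d vanishes
   wherever g has a knot (complementary slackness).  Existence of the minimiser follows from
   compactness of a sublevel set, uniqueness from the strictly convex quadratic term. *)

section \<open>Second differences, ramps and the double cumulative sum\<close>

lemma D2_add [simp]: "D2 (\<lambda>k. g k + h k) x = D2 g x + D2 h x"
  by (simp add: D2_def)

lemma D2_scale [simp]: "D2 (\<lambda>k. c * g k) x = c * D2 g x"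
  by (simp add: D2_def algebra_simps)

lemma D2_uminus [simp]: "D2 (\<lambda>k. - g k) x = - D2 g x"
  by (simp add: D2_def)

lemma Hhat_Suc_Suc: "Hhat d (Suc (Suc n)) = 2 * Hhat d (Suc n) - Hhat d n + d (Suc n)"
  by (simp add: Hhat_def lessThan_Suc atMost_Suc)

lemma summation_by_parts_twice:
  assumes "1 \<le> n"
  shows "(\<Sum>k\<le>n. d k * h k) = (\<Sum>x\<in>{1..<n}. Hhat d x * D2 h x)
     + Hhat d n * (h (n - 1) - 2 * h n) + Hhat d (Suc n) * h n"
  using assms
proof (induction n rule: nat_induct_at_least)
  case base
  then show ?case by (simp add: Hhat_def atMost_Suc lessThan_Suc algebra_simps)
next
  case (Suc n)
  have "(\<Sum>k\<le>Suc n. d k * h k) = (\<Sum>x\<in>{1..<n}. Hhat d x * D2 h x)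
     + Hhat d n * (h (n - 1) - 2 * h n) + Hhat d (Suc n) * h n + d (Suc n) * h (Suc n)"
    using Suc.IH by simp
  also have "\<dots> = (\<Sum>x\<in>{1..<Suc n}. Hhat d x * D2 h x)
     + Hhat d (Suc n) * (h (Suc n - 1) - 2 * h (Suc n)) + Hhat d (Suc (Suc n)) * h (Suc n)"
    using Suc.hyps by (simp add: atLeastLessThanSuc Hhat_Suc_Suc D2_def algebra_simps)
  finally show ?case .
qed

text \<open>The ramp (x - k)_+, written with truncated subtraction on nat.  Its second difference is
  the indicator of x, and pairing with it recovers the double cumulative sum.\<close>

definition ramp :: "nat \<Rightarrow> nat \<Rightarrow> real" where
  "ramp x k = real (x - k)"

lemma ramp_vanishes: "x \<le> k \<Longrightarrow> ramp x k = 0"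
  by (simp add: ramp_def)

lemma D2_ramp: "1 \<le> k \<Longrightarrow> D2 (ramp x) k = (if k = x then 1 else 0)"
  by (cases "k < x") (auto simp: D2_def ramp_def of_nat_diff)

lemma Hhat_weighted_sum: "Hhat d x = (\<Sum>j<x. d j * ramp x j)"
proof (induction x)
  case 0
  then show ?case by (simp add: Hhat_def)
next
  case (Suc x)
  have "Hhat d (Suc x) = Hhat d x + (\<Sum>j\<le>x. d j)"
    by (simp add: Hhat_def)
  also have "\<dots> = (\<Sum>j<x. d j * ramp x j) + (\<Sum>j<Suc x. d j)"
    using Suc.IH by (simp add: lessThan_Suc_atMost)
  also have "\<dots> = (\<Sum>j<Suc x. d j * ramp x j + d j)"
    by (simp add: sum.distrib ramp_def)
  also have "\<dots> = (\<Sum>j<Suc x. d j * ramp (Suc x) j)"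
    by (rule sum.cong) (auto simp: ramp_def Suc_diff_le algebra_simps)
  finally show ?case .
qed

lemma Hhat_eq_ramp_pairing:
  assumes "x \<le> Suc n"
  shows "Hhat d x = (\<Sum>k\<le>n. d k * ramp x k)"
  unfolding Hhat_weighted_sum
  by (rule sum.mono_neutral_left) (use assms in \<open>auto simp: ramp_def\<close>)

lemma nonneg_of_quadratic_perturbation:
  fixes a b :: real
  assumes perturb: "\<And>t. 0 < t \<Longrightarrow> t \<le> 1 \<Longrightarrow> 0 \<le> t * a + t\<^sup>2 * b" and "0 \<le> b"
  shows "0 \<le> a"
proof (rule ccontr)
  assume "\<not> 0 \<le> a"
  define t where "t = min 1 (- a / (b + 1))"
  have t: "0 < t" "t \<le> 1" "t \<le> - a / (b + 1)"
    using \<open>\<not> 0 \<le> a\<close> \<open>0 \<le> b\<close> by (auto simp: t_def intro: divide_neg_pos)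
  have "t * (b + 1) \<le> - a"
    using t(3) \<open>0 \<le> b\<close> by (subst (asm) pos_le_divide_eq) auto
  then have "a + t * b < 0" using t(1) by (simp add: distrib_left)
  then have "t * (a + t * b) < 0" using t(1) by (rule mult_pos_neg[rotated])
  with perturb[OF t(1,2)] show False by (simp add: power2_eq_square algebra_simps)
qed

section \<open>Projection onto a cone of piecewise convex vectors\<close>

text \<open>Vectors are functions on nat vanishing beyond S+1.  The cone requires convexity at every
  interior index 1..S outside an exceptional set P (the knots of p0); W is the target.\<close>

locale knot_cone =
  fixes S :: nat and P :: "nat set" and W :: "nat \<Rightarrow> real"
begin

definition cone :: "(nat \<Rightarrow> real) set" where
  "cone = {g. (\<forall>k>Suc S. g k = 0) \<and> (\<forall>x. 1 \<le> x \<and> x \<le> S \<and> x \<notin> P \<longrightarrow> 0 \<le> D2 g x)}"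

definition crit :: "(nat \<Rightarrow> real) \<Rightarrow> real" where
  "crit g = 1/2 * (\<Sum>k\<le>Suc S. (g k - W k)\<^sup>2)"

definition pair :: "(nat \<Rightarrow> real) \<Rightarrow> (nat \<Rightarrow> real) \<Rightarrow> real" where
  "pair d h = (\<Sum>k\<le>Suc S. d k * h k)"

text \<open>Membership in the dual cone, expressed through the double cumulative sum; the lemma
  dual_cone_iff below justifies the name.\<close>

definition in_dual_cone :: "(nat \<Rightarrow> real) \<Rightarrow> bool" where
  "in_dual_cone d \<longleftrightarrow>
     (\<forall>x\<le>S+2. 0 \<le> Hhat d x) \<and> (\<forall>x\<le>S+2. x \<in> P \<or> S < x \<longrightarrow> Hhat d x = 0)"

lemma cone_add: "g \<in> cone \<Longrightarrow> h \<in> cone \<Longrightarrow> (\<lambda>k. g k + h k) \<in> cone"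
  by (simp add: cone_def)

lemma cone_scale: "g \<in> cone \<Longrightarrow> 0 \<le> c \<Longrightarrow> (\<lambda>k. c * g k) \<in> cone"
  by (simp add: cone_def)

lemma ramp_in_cone: "x \<le> S + 2 \<Longrightarrow> ramp x \<in> cone"
  by (simp add: cone_def D2_ramp ramp_vanishes)

text \<open>A negated ramp has a concave kink at x, which is allowed only at exceptional points.\<close>

lemma neg_ramp_in_cone: "x \<le> S + 2 \<Longrightarrow> x \<in> P \<or> S < x \<Longrightarrow> (\<lambda>k. - ramp x k) \<in> cone"
  by (auto simp: cone_def D2_ramp ramp_vanishes)

lemma pair_diff: "pair d (\<lambda>k. h k - g k) = pair d h - pair d g"
  by (simp add: pair_def algebra_simps sum_subtractf del: sum.atMost_Suc)

lemma pair_scale: "pair d (\<lambda>k. c * h k) = c * pair d h"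
  by (simp add: pair_def sum_distrib_left algebra_simps del: sum.atMost_Suc)

lemma pair_uminus: "pair d (\<lambda>k. - h k) = - pair d h"
  by (simp add: pair_def sum_negf del: sum.atMost_Suc)

lemma pair_ramp: "x \<le> S + 2 \<Longrightarrow> pair d (ramp x) = Hhat d x"
  unfolding pair_def by (simp add: Hhat_eq_ramp_pairing)

lemma pair_by_parts:
  "pair d h = (\<Sum>x\<in>{1..S}. Hhat d x * D2 h x)
     + Hhat d (Suc S) * (h S - 2 * h (Suc S)) + Hhat d (Suc (Suc S)) * h (Suc S)"
  using summation_by_parts_twice[of "Suc S" d h]
  by (simp add: pair_def atLeastLessThanSuc_atLeastAtMost del: sum.atMost_Suc)

lemma pair_in_dual_cone:
  assumes "in_dual_cone d"
  shows "pair d h = (\<Sum>x\<in>{1..S}. Hhat d x * D2 h x)"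
    and "h \<in> cone \<Longrightarrow> x \<in> {1..S} \<Longrightarrow> 0 \<le> Hhat d x * D2 h x"
proof -
  have "Hhat d (Suc S) = 0" "Hhat d (Suc (Suc S)) = 0"
    using assms by (auto simp: in_dual_cone_def)
  then show "pair d h = (\<Sum>x\<in>{1..S}. Hhat d x * D2 h x)" by (simp add: pair_by_parts)
  show "0 \<le> Hhat d x * D2 h x" if "h \<in> cone" "x \<in> {1..S}"
    using assms that by (cases "x \<in> P") (auto simp: in_dual_cone_def cone_def)
qed

text \<open>The dual cone: (\<Rightarrow>) tests with ramps and negated ramps, (\<Leftarrow>) uses the
  termwise nonnegative expansion.\<close>

lemma dual_cone_iff: "(\<forall>h\<in>cone. 0 \<le> pair d h) \<longleftrightarrow> in_dual_cone d"
proof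
  assume dual: "\<forall>h\<in>cone. 0 \<le> pair d h"
  have nonneg: "0 \<le> Hhat d x" if "x \<le> S + 2" for x
    using dual ramp_in_cone[OF that] pair_ramp[OF that] by auto
  have "Hhat d x = 0" if "x \<le> S + 2" "x \<in> P \<or> S < x" for x
    using dual neg_ramp_in_cone[OF that] nonneg[OF that(1)] pair_ramp[OF that(1)]
    by (fastforce simp: pair_uminus)
  with nonneg show "in_dual_cone d" by (simp add: in_dual_cone_def)
next
  assume dual: "in_dual_cone d"
  show "\<forall>h\<in>cone. 0 \<le> pair d h"
    unfolding pair_in_dual_cone(1)[OF dual] by (intro ballI sum_nonneg pair_in_dual_cone(2)[OF dual])
qed

lemma complementary_slackness:
  assumes g: "g \<in> cone" and dual: "in_dual_cone d"
  shows "pair d g = 0 \<longleftrightarrow> (\<forall>x. 1 \<le> x \<and> x \<le> S \<and> 0 < D2 g x \<longrightarrow> Hhat d x = 0)"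
proof -
  have term_zero: "Hhat d x * D2 g x = 0 \<longleftrightarrow> (0 < D2 g x \<longrightarrow> Hhat d x = 0)"
    if "x \<in> {1..S}" for x
    using g dual that by (cases "x \<in> P") (auto simp: in_dual_cone_def cone_def)
  have "pair d g = 0 \<longleftrightarrow> (\<forall>x\<in>{1..S}. Hhat d x * D2 g x = 0)"
    unfolding pair_in_dual_cone(1)[OF dual]
    by (rule sum_nonneg_eq_0_iff) (use pair_in_dual_cone(2)[OF dual g] in auto)
  then show ?thesis using term_zero by auto
qed

lemma crit_diff:
  "crit h - crit g = pair (\<lambda>k. g k - W k) (\<lambda>k. h k - g k) + 1/2 * (\<Sum>k\<le>Suc S. (h k - g k)\<^sup>2)"
proof -
  have "crit h - crit g = (\<Sum>k\<le>Suc S. 1/2 * (h k - W k)\<^sup>2 - 1/2 * (g k - W k)\<^sup>2)"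
    by (simp add: crit_def sum_subtractf sum_distrib_left del: sum.atMost_Suc)
  also have "\<dots> = (\<Sum>k\<le>Suc S. (g k - W k) * (h k - g k) + 1/2 * (h k - g k)\<^sup>2)"
    by (rule sum.cong) (auto simp: power2_eq_square algebra_simps)
  also have "\<dots> = pair (\<lambda>k. g k - W k) (\<lambda>k. h k - g k) + 1/2 * (\<Sum>k\<le>Suc S. (h k - g k)\<^sup>2)"
    by (simp add: pair_def sum.distrib sum_distrib_left del: sum.atMost_Suc)
  finally show ?thesis .
qed

text \<open>Variational inequality for the projection onto a convex cone: necessity by perturbing
  g in the feasible directions h and -g, sufficiency by crit_diff.\<close>

lemma minimizer_iff_variational:
  assumes g: "g \<in> cone"
  shows "(\<forall>h\<in>cone. crit g \<le> crit h) \<longleftrightarrow>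
    (\<forall>h\<in>cone. 0 \<le> pair (\<lambda>k. g k - W k) h) \<and> pair (\<lambda>k. g k - W k) g = 0"
    (is "?min \<longleftrightarrow> ?var")
proof
  let ?d = "\<lambda>k. g k - W k"
  assume min: ?min
  have directional: "0 \<le> pair ?d e"
    if feasible: "\<And>t. 0 < t \<Longrightarrow> t \<le> 1 \<Longrightarrow> (\<lambda>k. g k + t * e k) \<in> cone" for e
  proof (rule nonneg_of_quadratic_perturbation)
    show "0 \<le> 1/2 * (\<Sum>k\<le>Suc S. (e k)\<^sup>2)" by (simp add: sum_nonneg)
    fix t :: real assume t: "0 < t" "t \<le> 1"
    have "0 \<le> crit (\<lambda>k. g k + t * e k) - crit g" using min feasible[OF t] by fastforce
    also have "\<dots> = t * pair ?d e + t\<^sup>2 * (1/2 * (\<Sum>k\<le>Suc S. (e k)\<^sup>2))"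
      by (simp add: crit_diff pair_scale power_mult_distrib sum_distrib_left algebra_simps
          del: sum.atMost_Suc)
    finally show "0 \<le> t * pair ?d e + t\<^sup>2 * (1/2 * (\<Sum>k\<le>Suc S. (e k)\<^sup>2))" .
  qed
  have "0 \<le> pair ?d h" if "h \<in> cone" for h
    using directional cone_add[OF g cone_scale[OF that]] by simp
  moreover have "0 \<le> pair ?d (\<lambda>k. - g k)"
  proof (rule directional)
    fix t :: real assume "0 < t" "t \<le> 1"
    then have "(\<lambda>k. (1 - t) * g k) \<in> cone" using cone_scale[OF g] by simp
    then show "(\<lambda>k. g k + t * - g k) \<in> cone" by (simp add: algebra_simps)
  qed
  ultimately show ?var using g by (fastforce simp: pair_uminus)
next
  assume var: ?var
  show ?min
  proof
    fix h assume "h \<in> cone"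
    have "crit h - crit g = pair (\<lambda>k. g k - W k) h - pair (\<lambda>k. g k - W k) g
        + 1/2 * (\<Sum>k\<le>Suc S. (h k - g k)\<^sup>2)"
      by (simp add: crit_diff pair_diff del: sum.atMost_Suc)
    moreover have "0 \<le> (\<Sum>k\<le>Suc S. (h k - g k)\<^sup>2)" by (simp add: sum_nonneg)
    moreover have "0 \<le> pair (\<lambda>k. g k - W k) h" using var \<open>h \<in> cone\<close> by blast
    ultimately show "crit g \<le> crit h" using var by linarith
  qed
qed

lemma minimizer_iff_Hhat:
  assumes g: "g \<in> cone"
  shows "(\<forall>h\<in>cone. crit g \<le> crit h) \<longleftrightarrow>
    (\<forall>x\<le>S+2. 0 \<le> Hhat (\<lambda>k. g k - W k) x) \<and>
    (\<forall>x\<le>S+2. x \<in> P \<or> S < x \<or> 0 < D2 g x \<longrightarrow> Hhat (\<lambda>k. g k - W k) x = 0)"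
    (is "_ \<longleftrightarrow> ?rhs")
proof -
  let ?d = "\<lambda>k. g k - W k"
  have "(\<forall>h\<in>cone. crit g \<le> crit h) \<longleftrightarrow> in_dual_cone ?d \<and> pair ?d g = 0"
    by (simp only: minimizer_iff_variational[OF g] dual_cone_iff)
  also have "\<dots> \<longleftrightarrow> in_dual_cone ?d \<and> (\<forall>x. 1 \<le> x \<and> x \<le> S \<and> 0 < D2 g x \<longrightarrow> Hhat ?d x = 0)"
    using complementary_slackness[OF g] by blast
  also have "\<dots> \<longleftrightarrow> ?rhs"
  proof
    assume L: "in_dual_cone ?d \<and> (\<forall>x. 1 \<le> x \<and> x \<le> S \<and> 0 < D2 g x \<longrightarrow> Hhat ?d x = 0)"
    have "Hhat ?d x = 0" if x: "x \<le> S + 2" and touch: "x \<in> P \<or> S < x \<or> 0 < D2 g x" for x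
    proof -
      consider "x \<in> P \<or> S < x" | "x = 0" | "1 \<le> x \<and> x \<le> S \<and> 0 < D2 g x"
        using touch by linarith
      then show ?thesis using L x by cases (auto simp: in_dual_cone_def Hhat_def)
    qed
    with L show ?rhs by (simp add: in_dual_cone_def)
  next
    assume ?rhs
    then show "in_dual_cone ?d \<and> (\<forall>x. 1 \<le> x \<and> x \<le> S \<and> 0 < D2 g x \<longrightarrow> Hhat ?d x = 0)"
      by (simp add: in_dual_cone_def)
  qed
  finally show ?thesis .
qed

text \<open>Uniqueness: by crit_diff the criterion grows quadratically away from a minimiser.\<close>

lemma minimizer_unique:
  assumes g1: "g1 \<in> cone" "\<forall>h\<in>cone. crit g1 \<le> crit h"
    and g2: "g2 \<in> cone" "\<forall>h\<in>cone. crit g2 \<le> crit h"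
  shows "g1 = g2"
proof -
  have "0 \<le> pair (\<lambda>k. g1 k - W k) g2" "pair (\<lambda>k. g1 k - W k) g1 = 0"
    using g1 g2(1) minimizer_iff_variational[OF g1(1)] by auto
  moreover have "crit g2 \<le> crit g1" using g1(1) g2(2) by blast
  ultimately have "(\<Sum>k\<le>Suc S. (g2 k - g1 k)\<^sup>2) \<le> 0"
    using crit_diff[of g2 g1] pair_diff[of "\<lambda>k. g1 k - W k" g2 g1] by linarith
  then have "(\<Sum>k\<le>Suc S. (g2 k - g1 k)\<^sup>2) = 0"
    by (meson antisym sum_nonneg zero_le_power2)
  then have "\<forall>k\<in>{..Suc S}. (g2 k - g1 k)\<^sup>2 = 0"
    using sum_nonneg_eq_0_iff[of "{..Suc S}" "\<lambda>k. (g2 k - g1 k)\<^sup>2"]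
    by (simp del: sum.atMost_Suc)
  moreover have "g1 k = 0 \<and> g2 k = 0" if "Suc S < k" for k
    using g1(1) g2(1) that by (simp add: cone_def)
  ultimately show ?thesis by (intro ext) (metis atMost_iff not_le power_eq_0_iff right_minus_eq)
qed

lemma continuous_D2: "continuous_on UNIV (\<lambda>g. D2 g x)"
  unfolding D2_def by (intro continuous_intros) simp_all

lemma continuous_crit: "continuous_on A crit"
proof -
  have "continuous_on UNIV crit"
    unfolding crit_def[abs_def] by (intro continuous_intros) simp_all
  then show ?thesis by (rule continuous_on_subset) simp
qed

lemma closed_cone: "closed cone"
proof -
  have "cone = (\<Inter>k\<in>{Suc S<..}. {g. g k = 0}) \<inter>
      (\<Inter>x\<in>{x. 1 \<le> x \<and> x \<le> S \<and> x \<notin> P}. {g. 0 \<le> D2 g x})"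
    unfolding cone_def by auto
  also have "closed \<dots>"
    by (intro closed_Int closed_INT ballI closed_Collect_eq closed_Collect_le continuous_D2)
      simp_all
  finally show ?thesis .
qed

text \<open>Sublevel sets of the criterion lie in a box around W, which is compact.\<close>

definition box :: "real \<Rightarrow> (nat \<Rightarrow> real) set" where
  "box r = PiE UNIV (\<lambda>k. if k \<le> Suc S then {W k - r..W k + r} else {0})"

lemma sublevel_in_box:
  assumes h: "h \<in> cone" and crit_h: "crit h \<le> c"
  shows "h \<in> box (sqrt (2 * c))"
proof -
  have "h k \<in> {W k - sqrt (2 * c)..W k + sqrt (2 * c)}" if "k \<le> Suc S" for k
  proof -
    have "\<bar>h k - W k\<bar>\<^sup>2 \<le> (\<Sum>k\<le>Suc S. (h k - W k)\<^sup>2)"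
      using that by (simp del: sum.atMost_Suc) (intro member_le_sum; simp)
    also have "\<dots> \<le> 2 * c" using crit_h by (simp add: crit_def del: sum.atMost_Suc)
    finally have "\<bar>h k - W k\<bar> \<le> sqrt (2 * c)" by (rule real_le_rsqrt)
    then show ?thesis by (auto simp: abs_le_iff)
  qed
  with h show ?thesis by (auto simp: box_def cone_def PiE_iff)
qed

lemma compact_box: "compact (box r)"
proof -
  have "compactin (product_topology (\<lambda>_. euclidean) UNIV) (box r)"
    unfolding box_def by (subst compactin_PiE) auto
  then show ?thesis by (simp add: euclidean_product_topology)
qed

text \<open>Existence: the sublevel set L at the zero vector is closed and lies in a compact box,
  so the continuous criterion attains its infimum on L, which is its infimum on the cone.\<close>

lemma minimizer_exists: "\<exists>g\<in>cone. \<forall>h\<in>cone. crit g \<le> crit h"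
proof -
  define L where "L = cone \<inter> {h. crit h \<le> crit (\<lambda>_. 0)}"
  have zero_in_L: "(\<lambda>_. 0) \<in> L" by (simp add: L_def cone_def D2_def)
  have "L \<subseteq> box (sqrt (2 * crit (\<lambda>_. 0)))" by (auto simp: L_def intro: sublevel_in_box)
  moreover have "closed L"
    unfolding L_def by (intro closed_Int closed_cone closed_Collect_le continuous_crit
        continuous_on_const)
  ultimately have "compact L" by (metis compact_box compact_Int_closed inf.absorb_iff2)
  then obtain g where g: "g \<in> L" and g_min: "\<forall>h\<in>L. crit g \<le> crit h"
    using continuous_attains_inf[OF _ _ continuous_crit] zero_in_L by blast
  have "crit g \<le> crit h" if "h \<in> cone" for h
    using g_min[rule_format, of h] g_min[rule_format, OF zero_in_L] that
    by (cases "crit h \<le> crit (\<lambda>_. 0)") (auto simp: L_def)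
  with g show ?thesis by (auto simp: L_def)
qed

end

section \<open>The knot sequence of p0\<close>

lemma sorted_hd_last_bounds:
  assumes "sorted s" and "y \<in> set s"
  shows "hd s \<le> y" and "y \<le> last s"
proof -
  show "hd s \<le> y" using assms by (cases s) auto
  show "y \<le> last s" using assms by (cases s rule: rev_cases) (auto simp: sorted_append)
qed

lemma between_consecutive_iff:
  fixes s :: "nat list"
  assumes "sorted s" and "s \<noteq> []"
  shows "(\<exists>j<length s - 1. s ! j < x \<and> x < s ! (j + 1)) \<longleftrightarrow>
    hd s < x \<and> x < last s \<and> x \<notin> set s"
  using assms
proof (induction s)
  case Nil
  then show ?case by simp
next
  case (Cons a ys)
  show ?case
  proof (cases "ys = []")
    case True
    then show ?thesis by simp
  next
    case False
    have ys: "sorted ys" "\<forall>y\<in>set ys. a \<le> y" using Cons.prems(1) by auto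
    have hd_le: "hd ys \<le> y" if "y \<in> set ys" for y
      using ys(1) that by (rule sorted_hd_last_bounds)
    have split: "(\<exists>j<length (a # ys) - 1. (a # ys) ! j < x \<and> x < (a # ys) ! (j + 1)) \<longleftrightarrow>
        (a < x \<and> x < hd ys) \<or> (\<exists>j<length ys - 1. ys ! j < x \<and> x < ys ! (j + 1))"
    proof -
      obtain n where n: "length ys = Suc n" using False by (cases ys) auto
      show ?thesis unfolding n length_Cons diff_Suc_1 Ex_less_Suc2
        using False by (simp add: hd_conv_nth n)
    qed
    have "a \<le> hd ys" "hd ys \<in> set ys" "hd ys \<le> last ys"
      using False ys(2) hd_le by auto
    moreover have "x \<notin> set ys" if "x < hd ys" using hd_le that by force
    ultimately show ?thesis
      unfolding split Cons.IH[OF ys(1) False] using False by (cases "x = hd ys") auto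
  qed
qed

lemma knot_seq_facts:
  shows "sorted (knot_seq p S)"
    and "set (knot_seq p S) = {0, S + 1} \<union> interior_knots p S"
proof -
  have "finite ({0, S + 1} \<union> interior_knots p S)"
    by (rule finite_subset[of _ "{..S+1}"]) (auto simp: interior_knots_def)
  then show "set (knot_seq p S) = {0, S + 1} \<union> interior_knots p S"
    unfolding knot_seq_def by (rule set_sorted_list_of_set)
  show "sorted (knot_seq p S)"
    unfolding knot_seq_def by (rule sorted_sorted_list_of_set)
qed

lemma between_knots_iff:
  "(\<exists>j<length (knot_seq p S) - 1. knot_seq p S ! j < x \<and> x < knot_seq p S ! (j + 1)) \<longleftrightarrow>
    1 \<le> x \<and> x \<le> S \<and> x \<notin> set (knot_seq p S)"
proof -
  let ?s = "knot_seq p S"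
  have bounds: "set ?s \<subseteq> {0..S+1}" "0 \<in> set ?s" "S + 1 \<in> set ?s"
    by (auto simp: knot_seq_facts(2) interior_knots_def)
  then have ne: "?s \<noteq> []" by auto
  have "hd ?s = 0"
    using sorted_hd_last_bounds(1)[OF knot_seq_facts(1) bounds(2)] by simp
  moreover have "last ?s = S + 1"
    using sorted_hd_last_bounds(2)[OF knot_seq_facts(1) bounds(3)] bounds(1) last_in_set[OF ne]
    by fastforce
  ultimately show ?thesis
    unfolding between_consecutive_iff[OF knot_seq_facts(1) ne] by auto
qed

lemma touch_points_iff:
  assumes "x \<le> S + 2"
  shows "x \<in> set (knot_seq p S) \<or> S < x \<or> 0 < D2 g x \<longleftrightarrow>
    x \<in> set (knot_seq p S) \<or> x = S + 2 \<or> (vec_knot g S x \<and>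
      (\<exists>j < length (knot_seq p S) - 1. knot_seq p S ! j < x \<and> x < knot_seq p S ! (j + 1)))"
proof -
  have "0 \<in> set (knot_seq p S)" "S + 1 \<in> set (knot_seq p S)"
    by (auto simp: knot_seq_facts(2))
  then show ?thesis
    unfolding between_knots_iff vec_knot_def using assms
    by (cases "x = 0") (auto simp: le_Suc_eq)
qed

lemma CK_eq_cone: "CK p S = knot_cone.cone S (set (knot_seq p S))"
  unfolding CK_def knot_cone.cone_def convex_on_range_def Let_def
  using between_knots_iff[of p S] by auto

lemma Phi_eq_crit: "Phi U p S = knot_cone.crit S (Wproc U p)"
  by (simp add: fun_eq_iff Phi_def knot_cone.crit_def)

text \<open>Because U(0) = 0 the partial sums of W telescope to U(F(k)); hence the gap between
  Hhat g and H is the double cumulative sum of the residual g - W.\<close>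

lemma Wproc_partial_sum: "U 0 = 0 \<Longrightarrow> (\<Sum>j\<le>k. Wproc U p j) = U (cdf p k)"
  by (induction k) (auto simp: Wproc_def)

lemma Hhat_minus_Hproc:
  "U 0 = 0 \<Longrightarrow> Hhat g x - Hproc U p x = Hhat (\<lambda>k. g k - Wproc U p k) x"
  by (simp add: Hhat_def Hproc_def sum_subtractf Wproc_partial_sum)

theorem theorem2:
  fixes p0 :: "nat \<Rightarrow> real" and S :: nat and U :: "real \<Rightarrow> real"
  assumes "1 \<le> S"
    and "convex_pmf_support p0 S"
    and "continuous_on {0..1} U" and "U 0 = 0" and "U 1 = 0"
  shows "(\<exists>!g. g \<in> CK p0 S \<and> (\<forall>h\<in>CK p0 S. Phi U p0 S g \<le> Phi U p0 S h))
    \<and> (\<forall>g\<in>CK p0 S.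
         (\<forall>h\<in>CK p0 S. Phi U p0 S g \<le> Phi U p0 S h) \<longleftrightarrow>
         ((\<forall>x\<le>S+2. Hproc U p0 x \<le> Hhat g x) \<and>
          (\<forall>x\<le>S+2. (x \<in> set (knot_seq p0 S) \<or> x = S + 2 \<or>
                      (vec_knot g S x \<and>
                       (\<exists>j < length (knot_seq p0 S) - 1.
                          knot_seq p0 S ! j < x \<and> x < knot_seq p0 S ! (j + 1))))
                     \<longrightarrow> Hhat g x = Hproc U p0 x)))"
proof -
  interpret knot_cone S "set (knot_seq p0 S)" "Wproc U p0" .
  show ?thesis
    unfolding CK_eq_cone Phi_eq_crit
  proof (intro conjI ballI)
    show "\<exists>!g. g \<in> cone \<and> (\<forall>h\<in>cone. crit g \<le> crit h)"
      using minimizer_exists minimizer_unique by blast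
  qed (simp only: minimizer_iff_Hhat Hhat_minus_Hproc[where U = U, OF \<open>U 0 = 0\<close>, symmetric]
      diff_ge_0_iff_ge right_minus_eq touch_points_iff cong: imp_cong)
qed

end
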